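(* Let $\mathbf A,\mathbf B\in\mathbb C^{n\times n}$, $k=\operatorname{Ind}\mathbf A$, $r=\operatorname{rank}\mathbf A^{k}$, and for $l\ge 0$ let $\check{\mathbf B}^{(l)}=\mathbf B\mathbf A^{l}=(\check b^{(l)}_{ij})$ with $i$-th row $\check{\mathbf b}^{(l)}_{i.}$ (so $\check{\mathbf B}^{(0)}=\mathbf B=(b_{ij})$). Let \[\mathbf X(t)=\mathbf B\mathbf A^{D}+\sum_{s=1}^{k}\frac{(-1)^{s-1}}{s!}\left(\mathbf B\mathbf A^{s-1}-\mathbf B\mathbf A^{s}\mathbf A^{D}\right)t^{s}\] (the partial solution of $\mathbf X'+\mathbf X\mathbf A=\mathbf B$). Writing $\Delta=\sum_{\alpha\in I_{r,n}}\left|(\mathbf A^{k+1})^{\alpha}_{\alpha}\right|$ and $N_{ij}(l)=\sum_{\alpha\in I_{r,n}\{j\}}\left|\left(\mathbf A^{k+1}_{j.}(\check{\mathbf b}^{(l)}_{i.})\right)^{\alpha}_{\alpha}\right|$, the entries of $\mathbf X(t)=(x_{ij})$ are, for all $i,j=1,\dots,n$, \[x_{ij}=\frac{N_{ij}(k)}{\Delta}+\sum_{s=1}^{k}\frac{(-1)^{s-1}}{s!}\left(\check b^{(s-1)}_{ij}-\frac{N_{ij}(k+s)}{\Delta}\right)t^{s}.\]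
   Context: $\operatorname{Ind}\mathbf A$ is the smallest nonnegative $k$ with $\operatorname{rank}\mathbf A^{k+1}=\operatorname{rank}\mathbf A^{k}$; the Drazin inverse $\mathbf A^{D}$ is the unique $\mathbf X$ with $\mathbf A^{k+1}\mathbf X=\mathbf A^{k}$, $\mathbf X\mathbf A\mathbf X=\mathbf X$, $\mathbf A\mathbf X=\mathbf X\mathbf A$. $\mathbf M_{j.}(\mathbf c)$ denotes $\mathbf M$ with its $j$-th row replaced by the row vector $\mathbf c$. $I_{r,n}$ is the set of strictly increasing sequences of $r$ elements of $\{1,\dots,n\}$, $I_{r,n}\{j\}=\{\alpha\in I_{r,n}:j\in\alpha\}$, $\mathbf M^{\alpha}_{\alpha}$ is the principal submatrix indexed by $\alpha$, $|\cdot|$ is the determinant. *)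

theory Defs
  imports "Jordan_Normal_Form.DL_Rank" "Jordan_Normal_Form.DL_Submatrix" "Jordan_Normal_Form.Determinant"
begin

definition crank :: "nat \<Rightarrow> complex mat \<Rightarrow> nat" where
  "crank n M = vec_space.rank n M"

definition mat_ind :: "nat \<Rightarrow> complex mat \<Rightarrow> nat" where
  "mat_ind n A = (LEAST k. crank n (A ^\<^sub>m (k+1)) = crank n (A ^\<^sub>m k))"

definition is_drazin_inv :: "nat \<Rightarrow> complex mat \<Rightarrow> complex mat \<Rightarrow> bool" where
  "is_drazin_inv n A X \<longleftrightarrow> X \<in> carrier_mat n n \<and>
     (let k = mat_ind n A in A ^\<^sub>m (k+1) * X = A ^\<^sub>m k) \<and> X * A * X = X \<and> A * X = X * A"

definition replace_row :: "complex mat \<Rightarrow> nat \<Rightarrow> complex vec \<Rightarrow> complex mat" where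
  "replace_row M j c = mat (dim_row M) (dim_col M) (\<lambda>(i,l). if i = j then c $ l else M $$ (i,l))"

text \<open>Principal minor indexed by the index set alpha (strictly increasing sequences = subsets).\<close>
definition pminor :: "complex mat \<Rightarrow> nat set \<Rightarrow> complex" where
  "pminor M \<alpha> = det (submatrix M \<alpha> \<alpha>)"

text \<open>I_{r,n} (0-based indices) and I_{r,n}{j}.\<close>
definition Irn :: "nat \<Rightarrow> nat \<Rightarrow> nat set set" where
  "Irn r n = {\<alpha>. \<alpha> \<subseteq> {0..<n} \<and> card \<alpha> = r}"

definition Irnj :: "nat \<Rightarrow> nat \<Rightarrow> nat \<Rightarrow> nat set set" where
  "Irnj r n j = {\<alpha> \<in> Irn r n. j \<in> \<alpha>}"

definition Xsol :: "nat \<Rightarrow> nat \<Rightarrow> complex mat \<Rightarrow> complex mat \<Rightarrow> complex mat \<Rightarrow> complex \<Rightarrow> complex mat" where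
  "Xsol n k A B AD t = mat n n (\<lambda>(i,j).
      (B * AD) $$ (i,j) +
      (\<Sum>s=1..k. ((-1)^(s-1) / of_nat (fact s)) *
          ((B * A ^\<^sub>m (s-1)) $$ (i,j) - (B * A ^\<^sub>m s * AD) $$ (i,j)) * t^s))"

end

theory Submission
  imports Defs
begin

text \<open>Factor A^k = F G0 through its column space, with F of full column rank r = rank A^k
  and F = A^k E, and put G = G0 A, so that A^(k+1) = F G. The Drazin identities give
  F = (A^D)^(k+1) F (G F), so the r x r matrix C = G F is invertible, and A^D = (A^D)^(k+2) F G,
  so A^D F adj(C) G = det C A^D. By Cauchy-Binet, Delta, the sum of the principal r-minors of
  F G, equals det C. Replacing row j of F G by row i of B A^(k+s) = U G with U = B A^s A^D F,
  the same expansion turns N_ij(k+s) into (U adj(C) G)_ij = Delta (B A^s A^D)_ij; these are the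
  coefficients B A^D and B A^s A^D occurring in X(t).\<close>

section \<open>The Cauchy--Binet formula\<close>

definition pick_perm :: "nat \<Rightarrow> nat set \<Rightarrow> (nat \<Rightarrow> nat) \<Rightarrow> nat \<Rightarrow> nat" where
  "pick_perm r \<alpha> \<tau> a = (if a < r then pick \<alpha> (\<tau> a) else a)"

definition index_injections :: "nat \<Rightarrow> nat \<Rightarrow> (nat \<Rightarrow> nat) set" where
  "index_injections r n =
     {f. (\<forall>i\<in>{0..<r}. f i \<in> {0..<n}) \<and> (\<forall>i. i \<notin> {0..<r} \<longrightarrow> f i = i) \<and> inj_on f {0..<r}}"

lemma finite_Irn: "finite (Irn r n)"
  unfolding Irn_def by (rule finite_subset[of _ "Pow {0..<n}"]) auto

lemma Irn_D:
  assumes "\<alpha> \<in> Irn r n"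
  shows "\<alpha> \<subseteq> {0..<n}" "card \<alpha> = r" "finite \<alpha>"
  using assms finite_subset unfolding Irn_def by auto

lemma Irn_Collect: "\<alpha> \<in> Irn r n \<Longrightarrow> {i. i < n \<and> i \<in> \<alpha>} = \<alpha>"
  by (auto simp: Irn_def)

lemma pick_inj: "i < card S \<Longrightarrow> j < card S \<Longrightarrow> pick S i = pick S j \<Longrightarrow> i = j"
  by (metis card_pick)

lemma pick_image: "finite S \<Longrightarrow> pick S ` {0..<card S} = S"
  by (intro card_subset_eq) (auto simp: card_image inj_on_def pick_inj pick_in_set)

lemma pick_lt: "\<alpha> \<in> Irn r n \<Longrightarrow> i < r \<Longrightarrow> pick \<alpha> i < n"
  using pick_in_set[of i \<alpha>] by (auto simp: Irn_def)

lemma pick_perm_in_index_injections: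
  assumes \<alpha>: "\<alpha> \<in> Irn r n" and \<tau>: "\<tau> permutes {0..<r}"
  shows "pick_perm r \<alpha> \<tau> \<in> index_injections r n"
proof -
  have \<tau>_lt: "i < r \<Longrightarrow> \<tau> i < r" for i using permutes_in_image[OF \<tau>, of i] by simp
  have "inj_on (pick_perm r \<alpha> \<tau>) {0..<r}"
  proof (rule inj_onI)
    fix a b assume "a \<in> {0..<r}" "b \<in> {0..<r}" "pick_perm r \<alpha> \<tau> a = pick_perm r \<alpha> \<tau> b"
    then have "\<tau> a = \<tau> b"
      using pick_inj[of "\<tau> a" \<alpha> "\<tau> b"] \<tau>_lt Irn_D(2)[OF \<alpha>] by (simp add: pick_perm_def)
    then show "a = b" using permutes_inj[OF \<tau>] by (simp add: inj_eq)
  qed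
  then show ?thesis
    using pick_lt[OF \<alpha> \<tau>_lt] by (simp add: index_injections_def pick_perm_def)
qed

lemma index_injection_pick_perm:
  assumes f: "f \<in> index_injections r n"
  obtains \<alpha> \<tau> where "\<alpha> \<in> Irn r n" "\<tau> permutes {0..<r}" "f = pick_perm r \<alpha> \<tau>"
proof -
  have inj: "inj_on f {0..<r}" and f_lt: "\<And>i. i < r \<Longrightarrow> f i < n"
    and f_id: "\<And>i. \<not> i < r \<Longrightarrow> f i = i"
    using f by (auto simp: index_injections_def)
  define \<alpha> where "\<alpha> = f ` {0..<r}"
  have card_\<alpha>: "card \<alpha> = r" unfolding \<alpha>_def using card_image[OF inj] by simp
  have f_in: "i < r \<Longrightarrow> f i \<in> \<alpha>" for i unfolding \<alpha>_def by simp
  \<comment> \<open>the permutation records the position of each \<open>f a\<close> within the ordered set \<open>\<alpha>\<close>\<close>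
  define \<tau> where "\<tau> a = (if a < r then card {x\<in>\<alpha>. x < f a} else a)" for a
  have pick_\<tau>: "a < r \<Longrightarrow> pick \<alpha> (\<tau> a) = f a" for a
    using pick_card_in_set[OF f_in] by (simp add: \<tau>_def)
  have \<tau>_lt: "\<tau> a < r" if a: "a < r" for a
  proof -
    have "{x\<in>\<alpha>. x < f a} \<subset> \<alpha>" using f_in[OF a] by auto
    then show ?thesis
      using psubset_card_mono[of \<alpha>] card_\<alpha> a by (simp add: \<tau>_def \<alpha>_def)
  qed
  have "\<tau> permutes {0..<r}"
  proof (rule inj_on_nat_permutes)
    show "inj_on \<tau> {0..<r}"
    proof (rule inj_onI)
      fix a b assume "a \<in> {0..<r}" "b \<in> {0..<r}" "\<tau> a = \<tau> b"
      then have "f a = f b" using pick_\<tau>[of a] pick_\<tau>[of b] by simp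
      with inj \<open>a \<in> {0..<r}\<close> \<open>b \<in> {0..<r}\<close> show "a = b" by (simp add: inj_on_eq_iff)
    qed
    show "\<tau> \<in> {0..<r} \<rightarrow> {0..<r}" using \<tau>_lt by simp
  qed (simp_all add: \<tau>_def)
  moreover have "\<alpha> \<in> Irn r n" using f_lt card_\<alpha> by (auto simp: Irn_def \<alpha>_def)
  moreover have "f = pick_perm r \<alpha> \<tau>" using pick_\<tau> f_id by (auto simp: pick_perm_def)
  ultimately show thesis using that by blast
qed

lemma pick_perm_eqD:
  assumes \<alpha>: "\<alpha> \<in> Irn r n" and \<tau>: "\<tau> permutes {0..<r}"
    and \<beta>: "\<beta> \<in> Irn r n" and \<sigma>: "\<sigma> permutes {0..<r}"
    and eq: "pick_perm r \<alpha> \<tau> = pick_perm r \<beta> \<sigma>"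
  shows "\<alpha> = \<beta>" "\<tau> = \<sigma>"
proof -
  have eq': "a < r \<Longrightarrow> pick \<alpha> (\<tau> a) = pick \<beta> (\<sigma> a)" for a
    using fun_cong[OF eq, of a] by (simp add: pick_perm_def)
  have "\<alpha> = pick \<alpha> ` \<tau> ` {0..<r}"
    using pick_image[OF Irn_D(3)[OF \<alpha>]] Irn_D(2)[OF \<alpha>] permutes_image[OF \<tau>] by simp
  also have "\<dots> = pick \<beta> ` \<sigma> ` {0..<r}"
    unfolding image_image using eq' by (intro image_cong) auto
  also have "\<dots> = \<beta>"
    using pick_image[OF Irn_D(3)[OF \<beta>]] Irn_D(2)[OF \<beta>] permutes_image[OF \<sigma>] by simp
  finally show "\<alpha> = \<beta>" .
  show "\<tau> = \<sigma>"
  proof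
    fix a
    show "\<tau> a = \<sigma> a"
    proof (cases "a < r")
      case True
      then show ?thesis
        using pick_inj[of "\<tau> a" \<alpha> "\<sigma> a"] eq'[OF True] \<open>\<alpha> = \<beta>\<close> Irn_D(2)[OF \<alpha>]
          permutes_in_image[OF \<tau>, of a] permutes_in_image[OF \<sigma>, of a]
        by simp
    qed (simp add: permutes_not_in[OF \<tau>] permutes_not_in[OF \<sigma>])
  qed
qed

lemma bij_betw_pick_perm:
  "bij_betw (\<lambda>(\<alpha>, \<tau>). pick_perm r \<alpha> \<tau>) (Irn r n \<times> {\<tau>. \<tau> permutes {0..<r}})
     (index_injections r n)"
proof (rule bij_betw_imageI)
  show "inj_on (\<lambda>(\<alpha>, \<tau>). pick_perm r \<alpha> \<tau>) (Irn r n \<times> {\<tau>. \<tau> permutes {0..<r}})"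
    using pick_perm_eqD by (fastforce simp: inj_on_def)
  show "(\<lambda>(\<alpha>, \<tau>). pick_perm r \<alpha> \<tau>) ` (Irn r n \<times> {\<tau>. \<tau> permutes {0..<r}}) = index_injections r n"
    using pick_perm_in_index_injections
    by (fastforce elim: index_injection_pick_perm)
qed

lemma submatrix_rows_carrier:
  assumes "F \<in> carrier_mat n m" and "\<alpha> \<in> Irn r n"
  shows "submatrix F \<alpha> UNIV \<in> carrier_mat r m"
  using carrier_matD[OF assms(1)] Irn_D(2)[OF assms(2)] Irn_Collect[OF assms(2)]
  by (intro carrier_matI) (simp_all add: dim_submatrix)

lemma submatrix_cols_carrier:
  assumes "G \<in> carrier_mat m n" and "\<alpha> \<in> Irn r n"
  shows "submatrix G UNIV \<alpha> \<in> carrier_mat m r"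
  using carrier_matD[OF assms(1)] Irn_D(2)[OF assms(2)] Irn_Collect[OF assms(2)]
  by (intro carrier_matI) (simp_all add: dim_submatrix)

lemma submatrix_rows_index:
  assumes "F \<in> carrier_mat n m" and "\<alpha> \<in> Irn r n" and "i < r" and "j < m"
  shows "submatrix F \<alpha> UNIV $$ (i, j) = F $$ (pick \<alpha> i, j)"
  using submatrix_index[of i F \<alpha> j UNIV] carrier_matD[OF assms(1)] assms(3,4)
    Irn_D(2)[OF assms(2)] Irn_Collect[OF assms(2)]
  by (simp add: pick_UNIV)

lemma submatrix_cols_index:
  assumes "G \<in> carrier_mat m n" and "\<alpha> \<in> Irn r n" and "i < m" and "j < r"
  shows "submatrix G UNIV \<alpha> $$ (i, j) = G $$ (i, pick \<alpha> j)"
  using submatrix_index[of i G UNIV j \<alpha>] carrier_matD[OF assms(1)] assms(3,4)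
    Irn_D(2)[OF assms(2)] Irn_Collect[OF assms(2)]
  by (simp add: pick_UNIV)

lemma submatrix_mult:
  assumes F: "F \<in> carrier_mat n m" and G: "G \<in> carrier_mat m p"
  shows "submatrix (F * G) I J = submatrix F I UNIV * submatrix G UNIV J"
proof (rule eq_matI)
  fix a b
  assume "a < dim_row (submatrix F I UNIV * submatrix G UNIV J)"
    and "b < dim_col (submatrix F I UNIV * submatrix G UNIV J)"
  then have a: "a < card {i. i < n \<and> i \<in> I}" and b: "b < card {j. j < p \<and> j \<in> J}"
    using F G by (simp_all add: dim_submatrix)
  have "pick I a < n" "pick J b < p" using pick_le a b by blast+
  then show "submatrix (F * G) I J $$ (a, b) = (submatrix F I UNIV * submatrix G UNIV J) $$ (a, b)"
    using F G a b
    by (simp add: submatrix_index dim_submatrix scalar_prod_def atLeast0LessThan pick_UNIV)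
qed (use F G in \<open>simp_all add: dim_submatrix\<close>)

lemma det_mult_sum_index_injections:
  fixes F G :: "'a::comm_ring_1 mat"
  assumes F: "F \<in> carrier_mat n r" and G: "G \<in> carrier_mat r n"
  shows "det (G * F) = (\<Sum>f\<in>index_injections r n.
           (\<Prod>a\<in>{0..<r}. G $$ (a, f a)) * det (mat\<^sub>r r r (\<lambda>a. row F (f a))))"
    (is "_ = sum ?g _")
proof -
  let ?Fs = "{f. (\<forall>i\<in>{0..<r}. f i \<in> {0..<n}) \<and> (\<forall>i. i \<notin> {0..<r} \<longrightarrow> f i = i)}"
  have fin: "finite ?Fs" by (rule finite_bounded_functions) auto
  have sub: "index_injections r n \<subseteq> ?Fs" by (auto simp: index_injections_def)
  have "det (G * F) = (\<Sum>f\<in>?Fs. det (mat\<^sub>r r r (\<lambda>a. G $$ (a, f a) \<cdot>\<^sub>v row F (f a))))"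
    unfolding mat_mul_finsum_alt[OF G F] by (rule det_linear_rows_sum) (use F in auto)
  also have "\<dots> = sum ?g ?Fs"
    by (intro sum.cong refl det_rows_mul) (use F in auto)
  \<comment> \<open>a non-injective index map repeats a row of \<open>F\<close>\<close>
  also have "\<dots> = sum ?g (index_injections r n)"
  proof (rule sum.mono_neutral_right[OF fin sub], rule ballI)
    fix f assume "f \<in> ?Fs - index_injections r n"
    then obtain i j where ij: "f i = f j" "i \<noteq> j" "i < r" "j < r" and "f i < n"
      by (auto simp: index_injections_def inj_on_def)
    then have "det (mat\<^sub>r r r (\<lambda>a. row F (f a))) = 0"
      by (intro det_identical_rows[OF _ ij(2-4)]) (use F in auto)
    then show "?g f = 0" by simp
  qed
  finally show ?thesis .
qed

lemma sum_permutes_pick_perm: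
  fixes F G :: "'a::comm_ring_1 mat"
  assumes F: "F \<in> carrier_mat n r" and G: "G \<in> carrier_mat r n" and \<alpha>: "\<alpha> \<in> Irn r n"
  shows "(\<Sum>\<tau>\<in>{\<tau>. \<tau> permutes {0..<r}}. (\<Prod>a\<in>{0..<r}. G $$ (a, pick_perm r \<alpha> \<tau> a)) *
            det (mat\<^sub>r r r (\<lambda>a. row F (pick_perm r \<alpha> \<tau> a))))
         = det (submatrix G UNIV \<alpha>) * det (submatrix F \<alpha> UNIV)"
proof -
  have F\<alpha>: "submatrix F \<alpha> UNIV \<in> carrier_mat r r" by (rule submatrix_rows_carrier[OF F \<alpha>])
  have G\<alpha>: "submatrix G UNIV \<alpha> \<in> carrier_mat r r" by (rule submatrix_cols_carrier[OF G \<alpha>])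
  have summand: "(\<Prod>a\<in>{0..<r}. G $$ (a, pick_perm r \<alpha> \<tau> a)) *
      det (mat\<^sub>r r r (\<lambda>a. row F (pick_perm r \<alpha> \<tau> a)))
    = signof \<tau> * (\<Prod>a\<in>{0..<r}. submatrix G UNIV \<alpha> $$ (a, \<tau> a)) * det (submatrix F \<alpha> UNIV)"
    if \<tau>: "\<tau> permutes {0..<r}" for \<tau>
  proof -
    have \<tau>_lt: "a < r \<Longrightarrow> \<tau> a < r" for a using permutes_in_image[OF \<tau>, of a] by simp
    have "mat\<^sub>r r r (\<lambda>a. row F (pick_perm r \<alpha> \<tau> a))
        = mat r r (\<lambda>(i, j). submatrix F \<alpha> UNIV $$ (\<tau> i, j))"
      using F pick_lt[OF \<alpha> \<tau>_lt] submatrix_rows_index[OF F \<alpha> \<tau>_lt]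
      by (intro eq_matI) (auto simp: pick_perm_def)
    then have "det (mat\<^sub>r r r (\<lambda>a. row F (pick_perm r \<alpha> \<tau> a))) = signof \<tau> * det (submatrix F \<alpha> UNIV)"
      using det_permute_rows[OF F\<alpha> \<tau>] by simp
    moreover have "(\<Prod>a\<in>{0..<r}. G $$ (a, pick_perm r \<alpha> \<tau> a))
        = (\<Prod>a\<in>{0..<r}. submatrix G UNIV \<alpha> $$ (a, \<tau> a))"
      using submatrix_cols_index[OF G \<alpha> _ \<tau>_lt] by (intro prod.cong) (auto simp: pick_perm_def)
    ultimately show ?thesis by (simp add: ac_simps)
  qed
  show ?thesis
    unfolding det_def'[OF G\<alpha>] sum_distrib_right by (rule sum.cong) (simp_all add: summand)
qed

theorem cauchy_binet:
  fixes F G :: "'a::comm_ring_1 mat"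
  assumes F: "F \<in> carrier_mat n r" and G: "G \<in> carrier_mat r n"
  shows "det (G * F) = (\<Sum>\<alpha>\<in>Irn r n. det (submatrix G UNIV \<alpha>) * det (submatrix F \<alpha> UNIV))"
proof -
  let ?g = "\<lambda>f. (\<Prod>a\<in>{0..<r}. G $$ (a, f a)) * det (mat\<^sub>r r r (\<lambda>a. row F (f a)))"
  have "det (G * F) = sum ?g (index_injections r n)"
    by (rule det_mult_sum_index_injections[OF F G])
  also have "\<dots> = (\<Sum>(\<alpha>, \<tau>)\<in>Irn r n \<times> {\<tau>. \<tau> permutes {0..<r}}. ?g (pick_perm r \<alpha> \<tau>))"
    using sum.reindex_bij_betw[OF bij_betw_pick_perm, of ?g] by (simp add: case_prod_beta')
  also have "\<dots> = (\<Sum>\<alpha>\<in>Irn r n. \<Sum>\<tau>\<in>{\<tau>. \<tau> permutes {0..<r}}. ?g (pick_perm r \<alpha> \<tau>))"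
    by (rule sum.cartesian_product[symmetric])
  also have "\<dots> = (\<Sum>\<alpha>\<in>Irn r n. det (submatrix G UNIV \<alpha>) * det (submatrix F \<alpha> UNIV))"
    by (intro sum.cong refl sum_permutes_pick_perm[OF F G])
  finally show ?thesis .
qed

section \<open>Principal minors with a replaced row\<close>

lemma pminor_mult:
  fixes F G :: "complex mat"
  assumes F: "F \<in> carrier_mat n r" and G: "G \<in> carrier_mat r n" and \<alpha>: "\<alpha> \<in> Irn r n"
  shows "pminor (F * G) \<alpha> = det (submatrix F \<alpha> UNIV) * det (submatrix G UNIV \<alpha>)"
  unfolding pminor_def submatrix_mult[OF F G]
  by (rule det_mult[OF submatrix_rows_carrier[OF F \<alpha>] submatrix_cols_carrier[OF G \<alpha>]])

lemma sum_pminor_mult: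
  fixes F G :: "complex mat"
  assumes F: "F \<in> carrier_mat n r" and G: "G \<in> carrier_mat r n"
  shows "(\<Sum>\<alpha>\<in>Irn r n. pminor (F * G) \<alpha>) = det (G * F)"
  unfolding cauchy_binet[OF F G] by (intro sum.cong refl) (simp add: pminor_mult[OF F G])

lemma replace_row_carrier: "M \<in> carrier_mat n m \<Longrightarrow> replace_row M j w \<in> carrier_mat n m"
  unfolding replace_row_def by auto

lemma replace_row_mult:
  assumes F: "F \<in> carrier_mat n r" and G: "G \<in> carrier_mat r n" and U: "U \<in> carrier_mat m r"
    and i: "i < m"
  shows "replace_row (F * G) j (row (U * G) i) = replace_row F j (row U i) * G"
proof (rule eq_matI)
  fix p l
  assume "p < dim_row (replace_row F j (row U i) * G)" and "l < dim_col (replace_row F j (row U i) * G)"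
  then have p: "p < n" and l: "l < n" using F G by (auto simp: replace_row_def)
  have "row (replace_row F j (row U i)) p = (if p = j then row U i else row F p)"
    using F U p by (intro eq_vecI) (auto simp: replace_row_def)
  then show "replace_row (F * G) j (row (U * G) i) $$ (p, l) = (replace_row F j (row U i) * G) $$ (p, l)"
    using F G U p l i by (auto simp: replace_row_def)
qed (use F G in \<open>auto simp: replace_row_def\<close>)

lemma replace_col_mult_unit_vec:
  fixes G F :: "'a::comm_ring_1 mat"
  assumes G: "G \<in> carrier_mat r n" and F: "F \<in> carrier_mat n r" and j: "j < n"
  shows "replace_col (G * F) (col G j) b = G * replace_col F (unit_vec n j) b"
proof (rule eq_matI)
  fix a c
  assume "a < dim_row (G * replace_col F (unit_vec n j) b)"
    and "c < dim_col (G * replace_col F (unit_vec n j) b)"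
  then have a: "a < r" and c: "c < r" using G F by (auto simp: replace_col_def)
  have "col (replace_col F (unit_vec n j) b) c = (if c = b then unit_vec n j else col F c)"
    using F c by (intro eq_vecI) (auto simp: replace_col_def)
  moreover have "row G a \<bullet> unit_vec n j = G $$ (a, j)"
    using G a j by simp
  ultimately show "replace_col (G * F) (col G j) b $$ (a, c) = (G * replace_col F (unit_vec n j) b) $$ (a, c)"
    using G F a c j by (auto simp: replace_col_def)
qed (use G F in \<open>auto simp: replace_col_def\<close>)

lemma det_replace_row_laplace:
  assumes Y: "Y \<in> carrier_mat r r" and p: "p < r" and w: "w \<in> carrier_vec r"
  shows "det (replace_row Y p w) = (\<Sum>b<r. w $ b * cofactor Y p b)"
proof -
  have "cofactor (replace_row Y p w) p b = cofactor Y p b" for b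
    unfolding cofactor_def using Y
    by (intro arg_cong[where f = "\<lambda>M. (-1) ^ (p + b) * det M"] eq_matI)
      (auto simp: mat_delete_def replace_row_def)
  then show ?thesis
    unfolding laplace_expansion_row[OF replace_row_carrier[OF Y] p]
    using Y p w by (intro sum.cong) (auto simp: replace_row_def)
qed

lemma det_replace_col_laplace:
  fixes Y :: "'a::comm_ring_1 mat"
  assumes Y: "Y \<in> carrier_mat r r" and b: "b < r" and v: "v \<in> carrier_vec r"
  shows "det (replace_col Y v b) = (\<Sum>i<r. v $ i * cofactor Y i b)"
proof -
  have Y': "replace_col Y v b \<in> carrier_mat r r" using Y by (auto simp: replace_col_def)
  have "cofactor (replace_col Y v b) i b = cofactor Y i b" for i
    unfolding cofactor_def using Y
    by (intro arg_cong[where f = "\<lambda>M. (-1) ^ (i + b) * det M"] eq_matI)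
      (auto simp: mat_delete_def replace_col_def)
  then show ?thesis
    unfolding laplace_expansion_column[OF Y' b]
    using Y b v by (intro sum.cong) (auto simp: replace_col_def)
qed

lemma det_replace_col_adj_mat:
  fixes Y :: "'a::comm_ring_1 mat"
  assumes Y: "Y \<in> carrier_mat r r" and b: "b < r" and v: "v \<in> carrier_vec r"
  shows "det (replace_col Y v b) = (adj_mat Y *\<^sub>v v) $ b"
  unfolding det_replace_col_laplace[OF assms]
  using Y b v by (auto simp: adj_mat_def scalar_prod_def atLeast0LessThan mult.commute intro: sum.cong)

lemma det_submatrix_replace_row:
  assumes F: "F \<in> carrier_mat n r" and \<alpha>: "\<alpha> \<in> Irn r n" and j: "j \<in> \<alpha>"
    and w: "w \<in> carrier_vec r"
  shows "det (submatrix (replace_row F j w) \<alpha> UNIV)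
       = (\<Sum>b<r. w $ b * cofactor (submatrix F \<alpha> UNIV) (card {x\<in>\<alpha>. x < j}) b)"
proof -
  let ?p = "card {x\<in>\<alpha>. x < j}"
  have F\<alpha>: "submatrix F \<alpha> UNIV \<in> carrier_mat r r" by (rule submatrix_rows_carrier[OF F \<alpha>])
  have p: "?p < r"
    using psubset_card_mono[OF Irn_D(3)[OF \<alpha>], of "{x\<in>\<alpha>. x < j}"] j Irn_D(2)[OF \<alpha>] by auto
  have pick_p: "pick \<alpha> ?p = j" by (rule pick_card_in_set[OF j])
  have "submatrix (replace_row F j w) \<alpha> UNIV = replace_row (submatrix F \<alpha> UNIV) ?p w"
  proof (rule eq_matI)
    fix a b
    assume "a < dim_row (replace_row (submatrix F \<alpha> UNIV) ?p w)"
      and "b < dim_col (replace_row (submatrix F \<alpha> UNIV) ?p w)"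
    then have a: "a < r" and b: "b < r" using F\<alpha> by (auto simp: replace_row_def)
    have "pick \<alpha> a = j \<longleftrightarrow> a = ?p"
      using pick_inj[of a \<alpha> ?p] pick_p a p Irn_D(2)[OF \<alpha>] by auto
    then show "submatrix (replace_row F j w) \<alpha> UNIV $$ (a, b)
        = replace_row (submatrix F \<alpha> UNIV) ?p w $$ (a, b)"
      using F F\<alpha> a b pick_lt[OF \<alpha> a]
        submatrix_rows_index[OF replace_row_carrier[OF F] \<alpha> a b] submatrix_rows_index[OF F \<alpha> a b]
      by (auto simp: replace_row_def)
  qed (use F\<alpha> submatrix_rows_carrier[OF replace_row_carrier[OF F] \<alpha>] in \<open>auto simp: replace_row_def\<close>)
  then show ?thesis using det_replace_row_laplace[OF F\<alpha> p w] by simp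
qed

lemma det_submatrix_replace_col_unit_vec:
  fixes F :: "'a::comm_ring_1 mat"
  assumes F: "F \<in> carrier_mat n r" and \<alpha>: "\<alpha> \<in> Irn r n" and b: "b < r" and j: "j < n"
  shows "det (submatrix (replace_col F (unit_vec n j) b) \<alpha> UNIV)
       = (if j \<in> \<alpha> then cofactor (submatrix F \<alpha> UNIV) (card {x\<in>\<alpha>. x < j}) b else 0)"
proof -
  let ?e = "unit_vec n j :: 'a vec" and ?p = "card {x\<in>\<alpha>. x < j}"
  have F\<alpha>: "submatrix F \<alpha> UNIV \<in> carrier_mat r r" by (rule submatrix_rows_carrier[OF F \<alpha>])
  have F': "replace_col F ?e b \<in> carrier_mat n r" using F by (auto simp: replace_col_def)
  have "submatrix (replace_col F ?e b) \<alpha> UNIV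
      = replace_col (submatrix F \<alpha> UNIV) (vec r (\<lambda>a. ?e $ pick \<alpha> a)) b"
    using F F\<alpha> submatrix_rows_carrier[OF F' \<alpha>] pick_lt[OF \<alpha>]
      submatrix_rows_index[OF F' \<alpha>] submatrix_rows_index[OF F \<alpha>]
    by (intro eq_matI) (auto simp: replace_col_def)
  then have "det (submatrix (replace_col F ?e b) \<alpha> UNIV)
      = (\<Sum>i<r. vec r (\<lambda>a. ?e $ pick \<alpha> a) $ i * cofactor (submatrix F \<alpha> UNIV) i b)"
    using det_replace_col_laplace[OF F\<alpha> b] by simp
  also have "\<dots> = (\<Sum>i<r. (if pick \<alpha> i = j then 1 else 0) * cofactor (submatrix F \<alpha> UNIV) i b)"
    using pick_lt[OF \<alpha>] j by (intro sum.cong) auto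
  also have "\<dots> = (if j \<in> \<alpha> then cofactor (submatrix F \<alpha> UNIV) ?p b else 0)"
  proof (cases "j \<in> \<alpha>")
    case True
    have p: "?p < r"
      using psubset_card_mono[OF Irn_D(3)[OF \<alpha>], of "{x\<in>\<alpha>. x < j}"] True Irn_D(2)[OF \<alpha>] by auto
    have "i < r \<Longrightarrow> pick \<alpha> i = j \<longleftrightarrow> i = ?p" for i
      using pick_inj[of i \<alpha> ?p] pick_card_in_set[OF True] p Irn_D(2)[OF \<alpha>] by auto
    then have "(\<Sum>i<r. (if pick \<alpha> i = j then 1 else 0) * cofactor (submatrix F \<alpha> UNIV) i b)
        = (\<Sum>i<r. if i = ?p then cofactor (submatrix F \<alpha> UNIV) i b else 0)"
      by (intro sum.cong) auto
    then show ?thesis using True p by simp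
  next
    case False
    then have "i < r \<Longrightarrow> pick \<alpha> i \<noteq> j" for i using pick_in_set[of i \<alpha>] Irn_D(2)[OF \<alpha>] by auto
    then show ?thesis using False by simp
  qed
  finally show ?thesis .
qed

lemma det_replace_col_mult:
  fixes F G :: "'a::comm_ring_1 mat"
  assumes F: "F \<in> carrier_mat n r" and G: "G \<in> carrier_mat r n" and j: "j < n" and b: "b < r"
  shows "det (replace_col (G * F) (col G j) b)
       = (\<Sum>\<alpha>\<in>Irnj r n j. cofactor (submatrix F \<alpha> UNIV) (card {x\<in>\<alpha>. x < j}) b
            * det (submatrix G UNIV \<alpha>))"
proof -
  let ?e = "unit_vec n j :: 'a vec"
  have F': "replace_col F ?e b \<in> carrier_mat n r" using F by (auto simp: replace_col_def)
  have "det (replace_col (G * F) (col G j) b) = det (G * replace_col F ?e b)"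
    by (simp add: replace_col_mult_unit_vec[OF G F j])
  also have "\<dots> = (\<Sum>\<alpha>\<in>Irn r n. det (submatrix G UNIV \<alpha>) * det (submatrix (replace_col F ?e b) \<alpha> UNIV))"
    by (rule cauchy_binet[OF F' G])
  also have "\<dots> = (\<Sum>\<alpha>\<in>Irn r n. if j \<in> \<alpha>
      then cofactor (submatrix F \<alpha> UNIV) (card {x\<in>\<alpha>. x < j}) b * det (submatrix G UNIV \<alpha>) else 0)"
    using det_submatrix_replace_col_unit_vec[OF F _ b j] by (intro sum.cong) auto
  also have "\<dots> = (\<Sum>\<alpha>\<in>Irnj r n j. cofactor (submatrix F \<alpha> UNIV) (card {x\<in>\<alpha>. x < j}) b
      * det (submatrix G UNIV \<alpha>))"
    unfolding Irnj_def by (rule sum.inter_filter[OF finite_Irn, symmetric])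
  finally show ?thesis .
qed

theorem sum_pminor_replace_row:
  fixes F G U :: "complex mat"
  assumes F: "F \<in> carrier_mat n r" and G: "G \<in> carrier_mat r n" and U: "U \<in> carrier_mat m r"
    and i: "i < m" and j: "j < n"
  shows "(\<Sum>\<alpha>\<in>Irnj r n j. pminor (replace_row (F * G) j (row (U * G) i)) \<alpha>)
       = (U * adj_mat (G * F) * G) $$ (i, j)"
proof -
  define w where "w = row U i"
  let ?cof = "\<lambda>\<alpha> b. cofactor (submatrix F \<alpha> UNIV) (card {x\<in>\<alpha>. x < j}) b"
  have w: "w \<in> carrier_vec r" unfolding w_def using U i by simp
  have C: "G * F \<in> carrier_mat r r" using G F by simp
  have Irnj: "\<alpha> \<in> Irn r n" "j \<in> \<alpha>" if "\<alpha> \<in> Irnj r n j" for \<alpha>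
    using that by (auto simp: Irnj_def)
  have "(\<Sum>\<alpha>\<in>Irnj r n j. pminor (replace_row (F * G) j (row (U * G) i)) \<alpha>)
      = (\<Sum>\<alpha>\<in>Irnj r n j. det (submatrix (replace_row F j w) \<alpha> UNIV) * det (submatrix G UNIV \<alpha>))"
    unfolding replace_row_mult[OF F G U i] w_def
    using pminor_mult[OF replace_row_carrier[OF F] G] Irnj by (intro sum.cong) auto
  also have "\<dots> = (\<Sum>\<alpha>\<in>Irnj r n j. \<Sum>b<r. w $ b * (?cof \<alpha> b * det (submatrix G UNIV \<alpha>)))"
    using det_submatrix_replace_row[OF F _ _ w] Irnj
    by (intro sum.cong) (auto simp: sum_distrib_right mult.assoc)
  also have "\<dots> = (\<Sum>b<r. w $ b * (\<Sum>\<alpha>\<in>Irnj r n j. ?cof \<alpha> b * det (submatrix G UNIV \<alpha>)))"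
    by (subst sum.swap) (simp add: sum_distrib_left)
  also have "\<dots> = (\<Sum>b<r. w $ b * (adj_mat (G * F) *\<^sub>v col G j) $ b)"
  proof (intro sum.cong refl arg_cong[where f = "\<lambda>x. w $ _ * x"])
    fix b assume "b \<in> {..<r}"
    moreover have "col G j \<in> carrier_vec r" using G by (simp add: carrier_vecI)
    ultimately show "(\<Sum>\<alpha>\<in>Irnj r n j. ?cof \<alpha> b * det (submatrix G UNIV \<alpha>))
        = (adj_mat (G * F) *\<^sub>v col G j) $ b"
      using det_replace_col_mult[OF F G j] det_replace_col_adj_mat[OF C] by simp
  qed
  also have "\<dots> = (U * (adj_mat (G * F) * G)) $$ (i, j)"
    using U G i j adj_mat(1)[OF C] by (simp add: w_def scalar_prod_def atLeast0LessThan)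
  also have "\<dots> = (U * adj_mat (G * F) * G) $$ (i, j)"
    using U G adj_mat(1)[OF C] by simp
  finally show ?thesis .
qed

section \<open>Full-rank factorization\<close>

lemma (in vec_space) subset_span_maximal_lin_indpt:
  assumes W: "W \<subseteq> carrier_vec n" and S: "maximal S (\<lambda>T. T \<subseteq> W \<and> lin_indpt T)"
  shows "W \<subseteq> span S"
proof
  fix w assume w: "w \<in> W"
  have SW: "S \<subseteq> W" and S_indpt: "lin_indpt S" using S by (auto simp: maximal_def)
  have SC: "S \<subseteq> carrier_vec n" using SW W by blast
  show "w \<in> span S"
  proof (rule ccontr)
    assume w_span: "w \<notin> span S"
    then have "w \<notin> S" using in_own_span[OF SC] by blast
    then have "lin_indpt (S \<union> {w})"
      using lin_dep_iff_in_span[OF SC S_indpt _ \<open>w \<notin> S\<close>] w W w_span by auto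
    then have "S \<union> {w} = S" using S SW w unfolding maximal_def by blast
    then show False using \<open>w \<notin> S\<close> by blast
  qed
qed

lemma mat_of_cols_eq_mult:
  fixes A :: "'a::semiring_1 mat"
  assumes A: "A \<in> carrier_mat n m" and xs: "set xs \<subseteq> set (cols A)"
  obtains E where "E \<in> carrier_mat m (length xs)" and "mat_of_cols n xs = A * E"
proof -
  have "\<exists>q<m. xs ! c = col A q" if "c < length xs" for c
  proof -
    have "xs ! c \<in> set (cols A)" using xs nth_mem[OF that] by blast
    then obtain q where "q < length (cols A)" "cols A ! q = xs ! c" by (metis in_set_conv_nth)
    then show ?thesis using A by auto
  qed
  then obtain idx where idx: "\<And>c. c < length xs \<Longrightarrow> idx c < m \<and> xs ! c = col A (idx c)"
    by metis
  define E where "E = mat m (length xs) (\<lambda>(q, c). if q = idx c then 1 else 0 :: 'a)"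
  have "mat_of_cols n xs = A * E"
  proof (rule eq_matI)
    fix i c assume "i < dim_row (A * E)" and "c < dim_col (A * E)"
    then have i: "i < n" and c: "c < length xs" using A by (auto simp: E_def)
    have "(A * E) $$ (i, c) = (\<Sum>q = 0..<m. A $$ (i, q) * E $$ (q, c))"
      using A i c by (simp add: E_def scalar_prod_def)
    also have "\<dots> = (\<Sum>q = 0..<m. if q = idx c then A $$ (i, q) else 0)"
      using c by (intro sum.cong) (auto simp: E_def)
    also have "\<dots> = xs ! c $ i" using idx[OF c] A i by simp
    finally show "mat_of_cols n xs $$ (i, c) = (A * E) $$ (i, c)"
      using i c by (simp add: mat_of_cols_def)
  qed (use A in \<open>auto simp: E_def\<close>)
  moreover have "E \<in> carrier_mat m (length xs)" by (simp add: E_def)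
  ultimately show thesis using that by blast
qed

lemma (in vec_space) mult_factor_col_space:
  assumes F: "F \<in> carrier_mat n r" and A: "A \<in> carrier_mat n m"
    and cols: "set (cols A) \<subseteq> col_space F"
  obtains G where "G \<in> carrier_mat r m" and "A = F * G"
proof -
  have "\<exists>g \<in> carrier_vec r. F *\<^sub>v g = col A q" if "q < m" for q
  proof -
    have "col A q \<in> set (cols A)" using A that by (simp add: cols_def)
    then show ?thesis using cols col_space_eq[OF F] F by auto
  qed
  then obtain g where g: "\<And>q. q < m \<Longrightarrow> g q \<in> carrier_vec r \<and> F *\<^sub>v g q = col A q"
    by metis
  define G where "G = mat r m (\<lambda>(i, q). g q $ i)"
  have "A = F * G"
  proof (rule eq_matI)
    fix i q assume "i < dim_row (F * G)" "q < dim_col (F * G)"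
    then have i: "i < n" and q: "q < m" using F by (auto simp: G_def)
    have "col G q = g q" using g[OF q] q by (intro eq_vecI) (auto simp: G_def)
    then have "(F * G) $$ (i, q) = row F i \<bullet> g q" using F i q by (simp add: G_def)
    also have "\<dots> = col A q $ i" using g[OF q] F i by (metis index_mult_mat_vec carrier_matD(1))
    finally show "A $$ (i, q) = (F * G) $$ (i, q)" using A i q by simp
  qed (use F A in \<open>auto simp: G_def\<close>)
  moreover have "G \<in> carrier_mat r m" by (simp add: G_def)
  ultimately show thesis using that by blast
qed

lemma (in vec_space) rank_factorization:
  assumes A: "A \<in> carrier_mat n m"
  obtains F G E where "F \<in> carrier_mat n (rank A)" and "G \<in> carrier_mat (rank A) m"
    and "E \<in> carrier_mat m (rank A)" and "A = F * G" and "F = A * E"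
    and "\<And>v. v \<in> carrier_vec (rank A) \<Longrightarrow> F *\<^sub>v v = 0\<^sub>v n \<Longrightarrow> v = 0\<^sub>v (rank A)"
proof -
  have cols_C: "set (cols A) \<subseteq> carrier_vec n" using A cols_dim by blast
  have "{} \<subseteq> set (cols A) \<and> lin_indpt {}"
    by (metis empty_subsetI fin_dim finite_basis_exists subset_li_is_li vec_vs vectorspace.basis_def)
  then obtain S where "finite S" and S: "maximal S (\<lambda>T. T \<subseteq> set (cols A) \<and> lin_indpt T)"
    using maximal_exists_superset[of "set (cols A)" "\<lambda>T. T \<subseteq> set (cols A) \<and> lin_indpt T" "{}"]
    by auto
  have SA: "S \<subseteq> set (cols A)" and S_indpt: "lin_indpt S" using S by (auto simp: maximal_def)
  obtain xs where xs: "set xs = S" "distinct xs" using finite_distinct_list[OF \<open>finite S\<close>] by blast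
  have len: "length xs = rank A"
    using rank_card_indpt[OF A S] distinct_card[OF xs(2)] xs(1) by simp
  define F where "F = mat_of_cols n xs"
  have F: "F \<in> carrier_mat n (rank A)" unfolding F_def len[symmetric] by simp
  have cols_F: "cols F = xs" unfolding F_def using xs SA cols_C by auto
  obtain E where "E \<in> carrier_mat m (rank A)" and "F = A * E"
    using mat_of_cols_eq_mult[OF A] xs SA len unfolding F_def by metis
  moreover obtain G where "G \<in> carrier_mat (rank A) m" and "A = F * G"
    using mult_factor_col_space[OF F A] subset_span_maximal_lin_indpt[OF cols_C S]
    unfolding col_space_def cols_F xs by blast
  moreover have "v = 0\<^sub>v (rank A)" if "v \<in> carrier_vec (rank A)" "F *\<^sub>v v = 0\<^sub>v n" for v
    using lin_depI[OF F that(1) _ that(2)] S_indpt xs cols_F by auto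
  ultimately show thesis using that F by blast
qed

lemma det_swap_mult_ne_zero:
  fixes F G Y :: "'a::field mat"
  assumes F: "F \<in> carrier_mat n r" and G: "G \<in> carrier_mat r n" and Y: "Y \<in> carrier_mat n n"
    and inj: "\<And>v. v \<in> carrier_vec r \<Longrightarrow> F *\<^sub>v v = 0\<^sub>v n \<Longrightarrow> v = 0\<^sub>v r"
    and F_eq: "F = Y * F * (G * F)"
  shows "det (G * F) \<noteq> 0"
proof
  have C: "G * F \<in> carrier_mat r r" using G F by simp
  assume "det (G * F) = 0"
  then obtain v where v: "v \<in> carrier_vec r" "v \<noteq> 0\<^sub>v r" and Cv: "(G * F) *\<^sub>v v = 0\<^sub>v r"
    using det_0_iff_vec_prod_zero_field[OF C] by auto
  have "F *\<^sub>v v = (Y * F) *\<^sub>v ((G * F) *\<^sub>v v)"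
    using F G Y v by (subst F_eq) (simp add: assoc_mult_mat_vec[of _ n r _ r v])
  also have "\<dots> = 0\<^sub>v n" unfolding Cv using F Y by (intro eq_vecI) (auto simp: scalar_prod_def)
  finally show False using inj[OF v(1)] v(2) by simp
qed

lemma mult_adj_mat_swap:
  fixes F G :: "'a::comm_ring_1 mat"
  assumes F: "F \<in> carrier_mat n r" and G: "G \<in> carrier_mat r n"
  shows "F * G * F * adj_mat (G * F) * G = det (G * F) \<cdot>\<^sub>m (F * G)"
proof -
  have C: "G * F \<in> carrier_mat r r" using G F by simp
  note adj = adj_mat[OF C]
  have "F * G * F * adj_mat (G * F) = F * (G * F * adj_mat (G * F))"
    unfolding assoc_mult_mat[OF F G F] using assoc_mult_mat[OF F C adj(1)] .
  also have "\<dots> = det (G * F) \<cdot>\<^sub>m F" using F by (simp add: adj(2) mult_smult_distrib[OF F one_carrier_mat])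
  finally show ?thesis using F G by (simp add: mult_smult_assoc_mat)
qed

section \<open>Drazin inverse\<close>

lemma pow_mat_add:
  fixes A :: "'a::semiring_1 mat"
  assumes A: "A \<in> carrier_mat n n"
  shows "A ^\<^sub>m (a + b) = A ^\<^sub>m a * A ^\<^sub>m b"
proof (induction b)
  case 0
  then show ?case using A by simp
next
  case (Suc b)
  then show ?case using A by (simp add: assoc_mult_mat[of _ n n _ n _ n])
qed

lemma pow_mat_commute:
  fixes A X :: "'a::semiring_1 mat"
  assumes A: "A \<in> carrier_mat n n" and X: "X \<in> carrier_mat n n" and AX: "A * X = X * A"
  shows "A ^\<^sub>m m * X = X * A ^\<^sub>m m"
proof (induction m)
  case 0
  then show ?case using A X by simp
next
  case (Suc m)
  have "A ^\<^sub>m Suc m * X = A ^\<^sub>m m * (A * X)" using A X by (simp add: assoc_mult_mat[of _ n n _ n _ n])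
  also have "\<dots> = (A ^\<^sub>m m * X) * A"
    unfolding AX using A X by (simp add: assoc_mult_mat[of _ n n _ n _ n])
  also have "\<dots> = X * A ^\<^sub>m Suc m"
    unfolding Suc using A X by (simp add: assoc_mult_mat[of _ n n _ n _ n])
  finally show ?case .
qed

lemma drazin_pow_mult:
  fixes A X :: "'a::semiring_1 mat"
  assumes A: "A \<in> carrier_mat n n" and X: "X \<in> carrier_mat n n"
    and XAX: "X * A * X = X" and AX: "A * X = X * A"
  shows "X ^\<^sub>m (m + 1) * A ^\<^sub>m m = X"
proof (induction m)
  case 0
  then show ?case using A X by simp
next
  case (Suc m)
  have Xm: "X ^\<^sub>m (m + 1) \<in> carrier_mat n n" and Am: "A ^\<^sub>m m \<in> carrier_mat n n"
    using pow_carrier_mat A X by blast+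
  note assoc = assoc_mult_mat[of _ n n _ n _ n] mult_carrier_mat[of _ n n _ n]
  have "X ^\<^sub>m (Suc m + 1) * A ^\<^sub>m Suc m = X ^\<^sub>m (m + 1) * X * (A ^\<^sub>m m * A)" by simp
  also have "\<dots> = X ^\<^sub>m (m + 1) * (X * A ^\<^sub>m m) * A"
    using Xm Am A X by (simp del: pow_mat.simps add: assoc)
  also have "\<dots> = X ^\<^sub>m (m + 1) * A ^\<^sub>m m * (X * A)"
    unfolding pow_mat_commute[OF A X AX, symmetric]
    using Xm Am A X by (simp del: pow_mat.simps add: assoc)
  also have "\<dots> = X * (A * X)" unfolding Suc AX ..
  also have "\<dots> = X" using XAX assoc_mult_mat[OF X A X] by simp
  finally show ?case .
qed

lemma drazin_core_factorization:
  fixes A X :: "'a::field mat"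
  assumes A: "A \<in> carrier_mat n n" and X: "X \<in> carrier_mat n n"
    and core: "A ^\<^sub>m (k + 1) * X = A ^\<^sub>m k" and XAX: "X * A * X = X" and AX: "A * X = X * A"
  obtains F G where "F \<in> carrier_mat n (vec_space.rank n (A ^\<^sub>m k))"
    and "G \<in> carrier_mat (vec_space.rank n (A ^\<^sub>m k)) n"
    and "A ^\<^sub>m (k + 1) = F * G" and "det (G * F) \<noteq> 0"
proof -
  let ?r = "vec_space.rank n (A ^\<^sub>m k)"
  have Ak: "A ^\<^sub>m k \<in> carrier_mat n n" using A by simp
  obtain F G0 E where F: "F \<in> carrier_mat n ?r" and G0: "G0 \<in> carrier_mat ?r n"
    and E: "E \<in> carrier_mat n ?r" and AkF: "A ^\<^sub>m k = F * G0" and FE: "F = A ^\<^sub>m k * E"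
    and inj: "\<And>v. v \<in> carrier_vec ?r \<Longrightarrow> F *\<^sub>v v = 0\<^sub>v n \<Longrightarrow> v = 0\<^sub>v ?r"
    using vec_space.rank_factorization[OF Ak] by metis
  define G where "G = G0 * A"
  have G: "G \<in> carrier_mat ?r n" unfolding G_def using G0 A by simp
  have M: "A ^\<^sub>m (k + 1) = F * G"
    unfolding G_def using AkF assoc_mult_mat[OF F G0 A] by simp
  have XM: "X * A ^\<^sub>m (k + 1) = A ^\<^sub>m k" unfolding pow_mat_commute[OF A X AX, symmetric] by (rule core)
  have "F = X ^\<^sub>m (k + 1) * A ^\<^sub>m k * A ^\<^sub>m (k + 1) * E"
    unfolding drazin_pow_mult[OF A X XAX AX] XM by (rule FE)
  also have "\<dots> = X ^\<^sub>m (k + 1) * (A ^\<^sub>m (k + 1) * (A ^\<^sub>m k * E))"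
    using pow_mat_add[OF A, of k "k + 1"] pow_mat_add[OF A, of "k + 1" k] A X E
    by (simp del: pow_mat.simps
        add: assoc_mult_mat[of _ n n _ n _ n] mult_carrier_mat[of _ n n _ n]
          assoc_mult_mat[of _ n n _ n _ ?r] add.commute)
  also have "\<dots> = X ^\<^sub>m (k + 1) * F * (G * F)"
    unfolding M FE[symmetric]
    using assoc_mult_mat[OF F G F] assoc_mult_mat[OF pow_carrier_mat[OF X] F mult_carrier_mat[OF G F]]
    by (simp del: pow_mat.simps)
  finally have "det (G * F) \<noteq> 0"
    using det_swap_mult_ne_zero[OF F G pow_carrier_mat[OF X] inj] by blast
  with F G M show thesis using that by blast
qed

lemma drazin_mult_adj_mat:
  fixes A X F G :: "'a::comm_ring_1 mat"
  assumes A: "A \<in> carrier_mat n n" and X: "X \<in> carrier_mat n n"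
    and XAX: "X * A * X = X" and AX: "A * X = X * A"
    and F: "F \<in> carrier_mat n r" and G: "G \<in> carrier_mat r n" and M: "A ^\<^sub>m (k + 1) = F * G"
  shows "X * F * adj_mat (G * F) * G = det (G * F) \<cdot>\<^sub>m X"
proof -
  define Z where "Z = X ^\<^sub>m (k + 2)"
  have Z: "Z \<in> carrier_mat n n" unfolding Z_def by (rule pow_carrier_mat[OF X])
  have FG: "F * G \<in> carrier_mat n n" and Ad: "adj_mat (G * F) \<in> carrier_mat r r"
    using F G adj_mat(1)[of "G * F" r] by simp_all
  have X_eq: "X = Z * (F * G)"
    unfolding Z_def using drazin_pow_mult[OF A X XAX AX, of "k + 1"] M by simp
  have "X * F * adj_mat (G * F) * G = Z * (F * G * F * adj_mat (G * F) * G)"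
    unfolding X_eq assoc_mult_mat[OF Z FG F]
      assoc_mult_mat[OF Z mult_carrier_mat[OF FG F] Ad]
      assoc_mult_mat[OF Z mult_carrier_mat[OF mult_carrier_mat[OF FG F] Ad] G] ..
  also have "\<dots> = det (G * F) \<cdot>\<^sub>m X"
    unfolding mult_adj_mat_swap[OF F G] X_eq by (rule mult_smult_distrib[OF Z FG])
  finally show ?thesis .
qed

lemma drazin_principal_minors:
  fixes A B X :: "complex mat"
  assumes A: "A \<in> carrier_mat n n" and B: "B \<in> carrier_mat n n" and X: "X \<in> carrier_mat n n"
    and core: "A ^\<^sub>m (k + 1) * X = A ^\<^sub>m k" and XAX: "X * A * X = X" and AX: "A * X = X * A"
    and i: "i < n" and j: "j < n"
  defines "r \<equiv> vec_space.rank n (A ^\<^sub>m k)"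
  defines "\<Delta> \<equiv> \<Sum>\<alpha>\<in>Irn r n. pminor (A ^\<^sub>m (k + 1)) \<alpha>"
  shows "\<Delta> \<noteq> 0"
    and "(\<Sum>\<alpha>\<in>Irnj r n j. pminor (replace_row (A ^\<^sub>m (k + 1)) j (row (B * A ^\<^sub>m (k + s)) i)) \<alpha>)
         = \<Delta> * (B * A ^\<^sub>m s * X) $$ (i, j)"
proof -
  obtain F G where F: "F \<in> carrier_mat n r" and G: "G \<in> carrier_mat r n"
    and M: "A ^\<^sub>m (k + 1) = F * G" and det: "det (G * F) \<noteq> 0"
    using drazin_core_factorization[OF A X core XAX AX] unfolding r_def by metis
  have C: "G * F \<in> carrier_mat r r" using G F by simp
  have \<Delta>: "\<Delta> = det (G * F)" unfolding \<Delta>_def M by (rule sum_pminor_mult[OF F G])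
  then show "\<Delta> \<noteq> 0" using det by simp
  have adj: "X * F * adj_mat (G * F) * G = \<Delta> \<cdot>\<^sub>m X"
    unfolding \<Delta> by (rule drazin_mult_adj_mat[OF A X XAX AX F G M])
  have XM: "X * A ^\<^sub>m (k + 1) = A ^\<^sub>m k" unfolding pow_mat_commute[OF A X AX, symmetric] by (rule core)
  define U where "U = B * A ^\<^sub>m s * X * F"
  have BAs: "B * A ^\<^sub>m s \<in> carrier_mat n n" using B A by simp
  have BAsX: "B * A ^\<^sub>m s * X \<in> carrier_mat n n" using BAs X by simp
  have U: "U \<in> carrier_mat n r" unfolding U_def using BAsX F by simp
  have "A ^\<^sub>m (k + s) = A ^\<^sub>m s * (X * (F * G))"
    unfolding M[symmetric] XM using pow_mat_add[OF A, of s k] by (simp add: add.commute)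
  then have "B * A ^\<^sub>m (k + s) = U * G"
    unfolding U_def assoc_mult_mat[OF BAsX F G] assoc_mult_mat[OF BAs X mult_carrier_mat[OF F G]]
    using assoc_mult_mat[OF B pow_carrier_mat[OF A] mult_carrier_mat[OF X mult_carrier_mat[OF F G]]]
    by simp
  then have "(\<Sum>\<alpha>\<in>Irnj r n j. pminor (replace_row (A ^\<^sub>m (k + 1)) j (row (B * A ^\<^sub>m (k + s)) i)) \<alpha>)
      = (U * adj_mat (G * F) * G) $$ (i, j)"
    unfolding M using sum_pminor_replace_row[OF F G U i j] by simp
  also have "U * adj_mat (G * F) * G = B * A ^\<^sub>m s * (X * F * adj_mat (G * F) * G)"
  proof -
    have XF: "X * F \<in> carrier_mat n r" using X F by simp
    have XFA: "X * F * adj_mat (G * F) \<in> carrier_mat n r" using XF adj_mat(1)[OF C] by simp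
    show ?thesis
      unfolding U_def assoc_mult_mat[OF BAs X F] assoc_mult_mat[OF BAs XF adj_mat(1)[OF C]]
        assoc_mult_mat[OF BAs XFA G] ..
  qed
  also have "(B * A ^\<^sub>m s * (X * F * adj_mat (G * F) * G)) $$ (i, j) = \<Delta> * (B * A ^\<^sub>m s * X) $$ (i, j)"
    unfolding adj mult_smult_distrib[OF BAs X] using carrier_matD[OF BAsX] i j by simp
  finally show "(\<Sum>\<alpha>\<in>Irnj r n j. pminor (replace_row (A ^\<^sub>m (k + 1)) j (row (B * A ^\<^sub>m (k + s)) i)) \<alpha>)
      = \<Delta> * (B * A ^\<^sub>m s * X) $$ (i, j)" .
qed

theorem theorem5p3:
  fixes n :: nat and A B AD :: "complex mat" and t :: complex
  assumes "A \<in> carrier_mat n n" and "B \<in> carrier_mat n n"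
    and "is_drazin_inv n A AD"
  defines "k \<equiv> mat_ind n A"
  defines "r \<equiv> crank n (A ^\<^sub>m k)"
  defines "\<Delta> \<equiv> (\<Sum>\<alpha>\<in>Irn r n. pminor (A ^\<^sub>m (k+1)) \<alpha>)"
  defines "N \<equiv> (\<lambda>i j l. \<Sum>\<alpha>\<in>Irnj r n j.
              pminor (replace_row (A ^\<^sub>m (k+1)) j (row (B * A ^\<^sub>m l) i)) \<alpha>)"
  shows "\<forall>i<n. \<forall>j<n. Xsol n k A B AD t $$ (i,j) =
           N i j k / \<Delta> +
           (\<Sum>s=1..k. ((-1)^(s-1) / of_nat (fact s)) *
              ((B * A ^\<^sub>m (s-1)) $$ (i,j) - N i j (k+s) / \<Delta>) * t^s)"
proof (intro allI impI)
  fix i j assume i: "i < n" and j: "j < n"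
  have AD: "AD \<in> carrier_mat n n" and core: "A ^\<^sub>m (k + 1) * AD = A ^\<^sub>m k"
    and ADAAD: "AD * A * AD = AD" and AAD: "A * AD = AD * A"
    using assms(3) unfolding is_drazin_inv_def k_def Let_def by auto
  note minors = drazin_principal_minors[OF assms(1,2) AD core ADAAD AAD i j]
  have N: "N i j (k + s) / \<Delta> = (B * A ^\<^sub>m s * AD) $$ (i, j)" for s
    using minors unfolding N_def \<Delta>_def r_def crank_def by simp
  have "B * A ^\<^sub>m 0 * AD = B * AD" using assms(1,2) by simp
  then have "N i j k / \<Delta> = (B * AD) $$ (i, j)" using N[of 0] by simp
  with N show "Xsol n k A B AD t $$ (i,j) = N i j k / \<Delta> +
      (\<Sum>s=1..k. ((-1)^(s-1) / of_nat (fact s)) *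
        ((B * A ^\<^sub>m (s-1)) $$ (i,j) - N i j (k+s) / \<Delta>) * t^s)"
    unfolding Xsol_def using i j by simp
qed

end
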